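(* Let $\mathcal X\subseteq[-1,1]^n$ and let $f:\mathcal X\to\{\pm1\}$ be a $(K,M)$-PTF. Then $f$ is a $(K,2M,B,\xi)$-PTF for $\xi=\frac1{2(n+1)^{\frac{K+1}2}KM}$ and $B=2(n+1)^{K/2}M$.
   Context: $\|p\|_{\mathrm{co}}$ denotes the Euclidean norm of the coefficient vector of a polynomial $p$. $f:\mathcal X\to\{\pm1\}$ is a $(K,M)$-PTF if there is a polynomial $p:\mathbb R^n\to\mathbb R$ of degree $\le K$ with $\|p\|_{\mathrm{co}}\le M$ and $p(\mathbf x)f(\mathbf x)\ge1$ for all $\mathbf x\in\mathcal X$. With $\mathcal B_r(\mathbf x)=\{\tilde{\mathbf x}\in[-1,1]^n:\|\mathbf x-\tilde{\mathbf x}\|_\infty\le r\}$, $f$ is a $(K,M,B,\xi)$-PTF if there is such a polynomial $p$ (degree $\le K$, $\|p\|_{\mathrm{co}}\le M$) with $B\ge p(\tilde{\mathbf x})f(\mathbf x)\ge1$ for all $\mathbf x\in\mathcal X$ and $\tilde{\mathbf x}\in\mathcal B_\xi(\mathbf x)$. *)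

theory Defs
  imports "HOL-Analysis.Analysis"
begin

text \<open>Points of R^n are vectors of type real^'n, with n = CARD('n).
A multivariate real polynomial of degree at most K is represented by its coefficient
function on exponent vectors (monomials) alpha :: 'n => nat, supported on the
monomials of total degree at most K.\<close>

definition monomials :: "nat \<Rightarrow> ('n::finite \<Rightarrow> nat) set" where
  "monomials K = {\<alpha>. (\<Sum>i\<in>UNIV. \<alpha> i) \<le> K}"

definition is_poly_deg :: "nat \<Rightarrow> (('n::finite \<Rightarrow> nat) \<Rightarrow> real) \<Rightarrow> bool" where
  "is_poly_deg K c \<longleftrightarrow> (\<forall>\<alpha>. c \<alpha> \<noteq> 0 \<longrightarrow> \<alpha> \<in> monomials K)"

definition poly_eval :: "nat \<Rightarrow> (('n::finite \<Rightarrow> nat) \<Rightarrow> real) \<Rightarrow> real^'n \<Rightarrow> real" where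
  "poly_eval K c x = (\<Sum>\<alpha>\<in>monomials K. c \<alpha> * (\<Prod>i\<in>UNIV. (x $ i) ^ (\<alpha> i)))"

definition coeff_norm :: "nat \<Rightarrow> (('n::finite \<Rightarrow> nat) \<Rightarrow> real) \<Rightarrow> real" where
  "coeff_norm K c = sqrt (\<Sum>\<alpha>\<in>monomials K. (c \<alpha>)\<^sup>2)"

definition cube :: "(real^'n::finite) set" where
  "cube = {x. \<forall>i. \<bar>x $ i\<bar> \<le> 1}"

definition inf_box :: "real \<Rightarrow> real^'n::finite \<Rightarrow> (real^'n) set" where
  "inf_box r x = {y \<in> cube. \<forall>i. \<bar>x $ i - y $ i\<bar> \<le> r}"

definition is_PTF :: "nat \<Rightarrow> real \<Rightarrow> (real^'n::finite) set \<Rightarrow> (real^'n \<Rightarrow> real) \<Rightarrow> bool" where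
  "is_PTF K M X f \<longleftrightarrow> (\<exists>c. is_poly_deg K c \<and> coeff_norm K c \<le> M \<and>
      (\<forall>x\<in>X. poly_eval K c x * f x \<ge> 1))"

definition is_robust_PTF :: "nat \<Rightarrow> real \<Rightarrow> real \<Rightarrow> real \<Rightarrow> (real^'n::finite) set \<Rightarrow> (real^'n \<Rightarrow> real) \<Rightarrow> bool" where
  "is_robust_PTF K M B \<xi> X f \<longleftrightarrow> (\<exists>c. is_poly_deg K c \<and> coeff_norm K c \<le> M \<and>
      (\<forall>x\<in>X. \<forall>y\<in>inf_box \<xi> x. 1 \<le> poly_eval K c y * f x \<and> poly_eval K c y * f x \<le> B))"

end

theory Submission
  imports Defs
begin

text \<open>There are at most \<open>(n+1)^K\<close> monomials of degree at most \<open>K\<close>, so by Cauchy-Schwarz the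
sum of the absolute values of the coefficients of \<open>p\<close> is at most \<open>(n+1)^(K/2) M\<close>. On the cube every
monomial has modulus at most 1 and, having degree at most \<open>K\<close>, is \<open>K\<close>-Lipschitz for the sup-norm.
Hence \<open>|p| \<le> (n+1)^(K/2) M\<close> on the cube and \<open>p\<close> varies by at most \<open>1/2\<close> on the \<open>\<xi>\<close>-box around a
point of \<open>X\<close>, where \<open>p f \<ge> 1\<close>. The polynomial \<open>2p\<close> is then the required robust threshold.\<close>

lemma monomials_0: "monomials 0 = {(\<lambda>_. 0) :: 'n::finite \<Rightarrow> nat}"
  by (auto simp: monomials_def)

lemma monomials_Suc_subset:
  "monomials (Suc K) \<subseteq>
     monomials K \<union> (\<Union>i. (\<lambda>\<alpha>. \<alpha>(i := Suc (\<alpha> i))) ` monomials K :: ('n::finite \<Rightarrow> nat) set)"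
proof
  fix \<alpha> :: "'n \<Rightarrow> nat"
  assume \<alpha>: "\<alpha> \<in> monomials (Suc K)"
  show "\<alpha> \<in> monomials K \<union> (\<Union>i. (\<lambda>\<alpha>. \<alpha>(i := Suc (\<alpha> i))) ` monomials K)"
  proof (cases "\<alpha> \<in> monomials K")
    case False
    with \<alpha> have deg: "(\<Sum>j\<in>UNIV. \<alpha> j) = Suc K"
      by (auto simp: monomials_def)
    then obtain i where i: "\<alpha> i > 0"
      by (metis Zero_not_Suc gr0I sum.neutral)
    define \<beta> where "\<beta> = \<alpha>(i := \<alpha> i - 1)"
    have "(\<Sum>j\<in>UNIV - {i}. \<beta> j) = (\<Sum>j\<in>UNIV - {i}. \<alpha> j)"
      by (rule sum.cong) (auto simp: \<beta>_def)
    then have "(\<Sum>j\<in>UNIV. \<beta> j) = \<alpha> i - 1 + (\<Sum>j\<in>UNIV - {i}. \<alpha> j)"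
      by (simp add: sum.remove[of UNIV i] \<beta>_def)
    also have "\<dots> = K"
      using deg i by (simp add: sum.remove[of UNIV i])
    finally have "\<beta> \<in> monomials K"
      by (simp add: monomials_def)
    moreover have "\<alpha> = \<beta>(i := Suc (\<beta> i))"
      using i by (auto simp: \<beta>_def)
    ultimately show ?thesis
      by blast
  qed simp
qed

lemma finite_monomials: "finite (monomials K :: ('n::finite \<Rightarrow> nat) set)"
proof (rule finite_subset)
  show "monomials K \<subseteq> PiE (UNIV :: 'n set) (\<lambda>_. {..K})"
  proof
    fix \<alpha> :: "'n \<Rightarrow> nat" assume "\<alpha> \<in> monomials K"
    then have "\<alpha> i \<le> K" for i
      using member_le_sum[of i UNIV \<alpha>] by (simp add: monomials_def)
    then show "\<alpha> \<in> PiE UNIV (\<lambda>_. {..K})"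
      by (simp add: PiE_UNIV_domain)
  qed
qed (simp add: finite_PiE)

lemma card_monomials_le: "card (monomials K :: ('n::finite \<Rightarrow> nat) set) \<le> (CARD('n) + 1) ^ K"
proof (induction K)
  case 0
  then show ?case
    by (simp add: monomials_0)
next
  case (Suc K)
  let ?S = "monomials K :: ('n \<Rightarrow> nat) set"
  let ?raise = "\<lambda>i \<alpha>. \<alpha>(i := Suc (\<alpha> i))"
  have "card (monomials (Suc K) :: ('n \<Rightarrow> nat) set) \<le> card (?S \<union> (\<Union>i. ?raise i ` ?S))"
    by (intro card_mono monomials_Suc_subset) (simp add: finite_monomials)
  also have "\<dots> \<le> card ?S + (\<Sum>i\<in>UNIV. card (?raise i ` ?S))"
    by (intro order_trans[OF card_Un_le] add_left_mono card_UN_le) simp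
  also have "\<dots> \<le> card ?S + (\<Sum>i\<in>(UNIV :: 'n set). card ?S)"
    by (intro add_left_mono sum_mono card_image_le finite_monomials)
  also have "\<dots> = (CARD('n) + 1) * card ?S"
    by simp
  also have "\<dots> \<le> (CARD('n) + 1) ^ Suc K"
    using Suc.IH by (simp del: mult_Suc)
  finally show ?case .
qed

lemma coeff_norm_nonneg: "0 \<le> coeff_norm K c"
  by (simp add: coeff_norm_def sum_nonneg)

lemma sum_abs_coeff_le:
  fixes c :: "('n::finite \<Rightarrow> nat) \<Rightarrow> real"
  assumes "coeff_norm K c \<le> M"
  shows "(\<Sum>\<alpha>\<in>monomials K. \<bar>c \<alpha>\<bar>) \<le> (real CARD('n) + 1) powr (real K / 2) * M"
proof -
  let ?N = "card (monomials K :: ('n \<Rightarrow> nat) set)"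
  have "(\<Sum>\<alpha>\<in>monomials K. \<bar>c \<alpha>\<bar>)\<^sup>2 \<le> (\<Sum>\<alpha>\<in>monomials K. \<bar>c \<alpha>\<bar>\<^sup>2) * ?N"
    by (rule sum_squared_le_sum_of_squares)
  then have "(\<Sum>\<alpha>\<in>monomials K. \<bar>c \<alpha>\<bar>) \<le> sqrt ((\<Sum>\<alpha>\<in>monomials K. (c \<alpha>)\<^sup>2) * ?N)"
    by (simp add: real_le_rsqrt)
  also have "\<dots> = coeff_norm K c * sqrt ?N"
    by (simp add: coeff_norm_def real_sqrt_mult)
  also have "\<dots> \<le> M * sqrt ((real CARD('n) + 1) ^ K)"
  proof (rule mult_mono)
    have "real ?N \<le> real ((CARD('n) + 1) ^ K)"
      using card_monomials_le of_nat_le_iff by blast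
    then show "sqrt ?N \<le> sqrt ((real CARD('n) + 1) ^ K)"
      by (simp add: add.commute)
    show "0 \<le> M"
      using assms coeff_norm_nonneg[of K c] by linarith
  qed (use assms in auto)
  also have "sqrt ((real CARD('n) + 1) ^ K) = (real CARD('n) + 1) powr (real K / 2)"
    by (simp add: sqrt_def powr_realpow[symmetric] root_powr_inverse powr_powr)
  finally show ?thesis
    by (simp add: mult.commute)
qed

lemma abs_monomial_le_1:
  fixes y :: "real^'n::finite"
  assumes "y \<in> cube"
  shows "\<bar>\<Prod>i\<in>UNIV. (y $ i) ^ \<alpha> i\<bar> \<le> 1"
  using assms by (auto simp: cube_def abs_prod power_abs intro!: prod_le_1 power_le_one)

lemma abs_monomial_diff_le:
  fixes x y :: "real^'n::finite"
  assumes "x \<in> cube" "y \<in> cube" and close: "\<forall>i. \<bar>x $ i - y $ i\<bar> \<le> r"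
  shows "\<bar>(\<Prod>i\<in>UNIV. (y $ i) ^ \<alpha> i) - (\<Prod>i\<in>UNIV. (x $ i) ^ \<alpha> i)\<bar> \<le> real (\<Sum>i\<in>UNIV. \<alpha> i) * r"
proof -
  have "\<bar>(\<Prod>i\<in>UNIV. (y $ i) ^ \<alpha> i) - (\<Prod>i\<in>UNIV. (x $ i) ^ \<alpha> i)\<bar>
      \<le> (\<Sum>i\<in>UNIV. \<bar>(y $ i) ^ \<alpha> i - (x $ i) ^ \<alpha> i\<bar>)"
    using norm_prod_diff[of UNIV "\<lambda>i. (y $ i) ^ \<alpha> i" "\<lambda>i. (x $ i) ^ \<alpha> i"] assms
    by (simp add: cube_def power_abs power_le_one)
  also have "\<dots> \<le> (\<Sum>i\<in>UNIV. real (\<alpha> i) * r)"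
  proof (rule sum_mono)
    fix i
    have "\<bar>(y $ i) ^ \<alpha> i - (x $ i) ^ \<alpha> i\<bar> \<le> real (\<alpha> i) * \<bar>y $ i - x $ i\<bar>"
      using norm_power_diff[of "y $ i" "x $ i" "\<alpha> i"] assms by (auto simp: cube_def)
    also have "\<dots> \<le> real (\<alpha> i) * r"
      using close[rule_format, of i] by (intro mult_left_mono) auto
    finally show "\<bar>(y $ i) ^ \<alpha> i - (x $ i) ^ \<alpha> i\<bar> \<le> real (\<alpha> i) * r" .
  qed
  also have "\<dots> = real (\<Sum>i\<in>UNIV. \<alpha> i) * r"
    by (simp add: sum_distrib_right)
  finally show ?thesis .
qed

lemma abs_poly_eval_le:
  assumes "y \<in> cube"
  shows "\<bar>poly_eval K c y\<bar> \<le> (\<Sum>\<alpha>\<in>monomials K. \<bar>c \<alpha>\<bar>)"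
proof -
  have "\<bar>poly_eval K c y\<bar> \<le> (\<Sum>\<alpha>\<in>monomials K. \<bar>c \<alpha>\<bar> * \<bar>\<Prod>i\<in>UNIV. (y $ i) ^ \<alpha> i\<bar>)"
    unfolding poly_eval_def abs_mult[symmetric] by (rule sum_abs)
  also have "\<dots> \<le> (\<Sum>\<alpha>\<in>monomials K. \<bar>c \<alpha>\<bar>)"
    by (intro sum_mono mult_left_le abs_monomial_le_1 assms) simp
  finally show ?thesis .
qed

lemma abs_poly_eval_diff_le:
  assumes "x \<in> cube" "y \<in> inf_box r x"
  shows "\<bar>poly_eval K c y - poly_eval K c x\<bar> \<le> (\<Sum>\<alpha>\<in>monomials K. \<bar>c \<alpha>\<bar>) * real K * r"
proof -
  have y: "y \<in> cube" and close: "\<forall>i. \<bar>x $ i - y $ i\<bar> \<le> r"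
    using assms(2) by (auto simp: inf_box_def)
  have r: "0 \<le> r"
    using close by (meson abs_ge_zero order_trans)
  have "\<bar>poly_eval K c y - poly_eval K c x\<bar>
      \<le> (\<Sum>\<alpha>\<in>monomials K. \<bar>c \<alpha>\<bar> * \<bar>(\<Prod>i\<in>UNIV. (y $ i) ^ \<alpha> i) - (\<Prod>i\<in>UNIV. (x $ i) ^ \<alpha> i)\<bar>)"
    unfolding poly_eval_def sum_subtractf[symmetric] right_diff_distrib[symmetric] abs_mult[symmetric]
    by (rule sum_abs)
  also have "\<dots> \<le> (\<Sum>\<alpha>\<in>monomials K. \<bar>c \<alpha>\<bar> * (real K * r))"
  proof (intro sum_mono mult_left_mono)
    fix \<alpha> :: "'a \<Rightarrow> nat"
    assume "\<alpha> \<in> monomials K"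
    then have "real (\<Sum>i\<in>UNIV. \<alpha> i) * r \<le> real K * r"
      using r by (intro mult_right_mono) (auto simp: monomials_def simp flip: of_nat_sum)
    then show "\<bar>(\<Prod>i\<in>UNIV. (y $ i) ^ \<alpha> i) - (\<Prod>i\<in>UNIV. (x $ i) ^ \<alpha> i)\<bar> \<le> real K * r"
      using abs_monomial_diff_le[OF assms(1) y close, of \<alpha>] by linarith
  qed simp
  also have "\<dots> = (\<Sum>\<alpha>\<in>monomials K. \<bar>c \<alpha>\<bar>) * real K * r"
    by (simp add: sum_distrib_right mult.assoc)
  finally show ?thesis .
qed

lemma is_poly_deg_scale: "is_poly_deg K c \<Longrightarrow> is_poly_deg K (\<lambda>\<alpha>. a * c \<alpha>)"
  by (simp add: is_poly_deg_def)

lemma poly_eval_scale: "poly_eval K (\<lambda>\<alpha>. a * c \<alpha>) y = a * poly_eval K c y"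
  by (simp add: poly_eval_def sum_distrib_left mult.assoc)

lemma coeff_norm_scale: "coeff_norm K (\<lambda>\<alpha>. a * c \<alpha>) = \<bar>a\<bar> * coeff_norm K c"
  by (simp add: coeff_norm_def power_mult_distrib sum_distrib_left[symmetric] real_sqrt_mult)

text \<open>For \<open>K = 0\<close> or \<open>M = 0\<close> the radius below is \<open>1 / 0 = 0\<close>, and the bound is trivial.\<close>

lemma sum_abs_coeff_mult_radius_le:
  fixes c :: "('n::finite \<Rightarrow> nat) \<Rightarrow> real"
  assumes "coeff_norm K c \<le> M"
  shows "(\<Sum>\<alpha>\<in>monomials K. \<bar>c \<alpha>\<bar>) * real K
           * (1 / (2 * (real CARD('n) + 1) powr ((real K + 1) / 2) * real K * M)) \<le> 1 / 2"
proof (cases "K = 0 \<or> M = 0")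
  case False
  define P where "P = (real CARD('n) + 1) powr (real K / 2)"
  define P' where "P' = (real CARD('n) + 1) powr ((real K + 1) / 2)"
  have "0 < M"
    using False assms coeff_norm_nonneg[of K c] by linarith
  moreover have "0 < P" "P \<le> P'"
    unfolding P_def P'_def by (auto intro: powr_mono)
  moreover have "(\<Sum>\<alpha>\<in>monomials K. \<bar>c \<alpha>\<bar>) \<le> P * M"
    unfolding P_def by (rule sum_abs_coeff_le[OF assms])
  ultimately have "(\<Sum>\<alpha>\<in>monomials K. \<bar>c \<alpha>\<bar>) \<le> P' * M"
    by (meson mult_right_mono less_imp_le order_trans)
  with False \<open>0 < M\<close> \<open>0 < P\<close> \<open>P \<le> P'\<close> show ?thesis
    unfolding P'_def[symmetric] by (simp add: field_simps)
qed auto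

lemma is_robust_PTF_of_stable_poly:
  assumes "\<forall>x\<in>X. f x \<in> {-1, 1}"
    and "is_poly_deg K c" "coeff_norm K c \<le> M"
    and margin: "\<forall>x\<in>X. 1 \<le> poly_eval K c x * f x"
    and stable: "\<And>x y. x \<in> X \<Longrightarrow> y \<in> inf_box \<xi> x \<Longrightarrow> \<bar>poly_eval K c y - poly_eval K c x\<bar> \<le> 1 / 2"
    and bounded: "\<And>x y. x \<in> X \<Longrightarrow> y \<in> inf_box \<xi> x \<Longrightarrow> 2 * \<bar>poly_eval K c y\<bar> \<le> B"
  shows "is_robust_PTF K (2 * M) B \<xi> X f"
  unfolding is_robust_PTF_def
proof (intro exI[of _ "\<lambda>\<alpha>. 2 * c \<alpha>"] conjI ballI)
  show "is_poly_deg K (\<lambda>\<alpha>. 2 * c \<alpha>)"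
    using assms(2) by (rule is_poly_deg_scale)
  show "coeff_norm K (\<lambda>\<alpha>. 2 * c \<alpha>) \<le> 2 * M"
    using assms(3) by (simp add: coeff_norm_scale)
next
  fix x y
  assume "x \<in> X" "y \<in> inf_box \<xi> x"
  then have "f x = 1 \<or> f x = -1" "1 \<le> poly_eval K c x * f x"
    "\<bar>poly_eval K c y - poly_eval K c x\<bar> \<le> 1 / 2" "2 * \<bar>poly_eval K c y\<bar> \<le> B"
    using assms(1) margin stable bounded by auto
  then show "1 \<le> poly_eval K (\<lambda>\<alpha>. 2 * c \<alpha>) y * f x"
    and "poly_eval K (\<lambda>\<alpha>. 2 * c \<alpha>) y * f x \<le> B"
    unfolding poly_eval_scale abs_le_iff by auto
qed

theorem lemma14:
  fixes X :: "(real^'n::finite) set" and f :: "real^'n \<Rightarrow> real"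
    and K :: nat and M :: real
  assumes "X \<subseteq> cube"
    and "\<forall>x\<in>X. f x \<in> {-1, 1}"
    and "is_PTF K M X f"
  shows "is_robust_PTF K (2 * M)
           (2 * (real CARD('n) + 1) powr (real K / 2) * M)
           (1 / (2 * (real CARD('n) + 1) powr ((real K + 1) / 2) * real K * M))
           X f"
proof -
  obtain c where c: "is_poly_deg K c" "coeff_norm K c \<le> M" "\<forall>x\<in>X. 1 \<le> poly_eval K c x * f x"
    using assms(3) unfolding is_PTF_def by blast
  let ?\<xi> = "1 / (2 * (real CARD('n) + 1) powr ((real K + 1) / 2) * real K * M)"
  have sum_abs_c: "(\<Sum>\<alpha>\<in>monomials K. \<bar>c \<alpha>\<bar>) \<le> (real CARD('n) + 1) powr (real K / 2) * M"
    using c(2) by (rule sum_abs_coeff_le)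
  show ?thesis
  proof (rule is_robust_PTF_of_stable_poly[OF assms(2) c])
    fix x y
    assume "x \<in> X" "y \<in> inf_box ?\<xi> x"
    then have "x \<in> cube" "y \<in> cube"
      using assms(1) by (auto simp: inf_box_def)
    show "\<bar>poly_eval K c y - poly_eval K c x\<bar> \<le> 1 / 2"
      using abs_poly_eval_diff_le[OF \<open>x \<in> cube\<close> \<open>y \<in> inf_box ?\<xi> x\<close>, of K c]
        sum_abs_coeff_mult_radius_le[OF c(2)] by linarith
    show "2 * \<bar>poly_eval K c y\<bar> \<le> 2 * (real CARD('n) + 1) powr (real K / 2) * M"
      using abs_poly_eval_le[OF \<open>y \<in> cube\<close>, of K c] sum_abs_c by linarith
  qed
qed

end
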